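(* Let $L$ be a Lie superalgebra of the type $S(t)$. Then $\overline{exp}^{gr}(L)=\limsup_{n\to\infty}\sqrt[n]{c_n^{gr}(L)}\le 2t$ for even $t$, and $\overline{exp}^{gr}(L)\le 2t-1$ for odd $t$.
   Context: $F$ is a field of characteristic zero. For a $\mathbb Z_2$-graded algebra $L=L_0\oplus L_1$, let $P_{k,n-k}$ be the space of multilinear nonassociative polynomials in even variables $x_1,\dots,x_k$ and odd variables $y_1,\dots,y_{n-k}$ of the absolutely free $\mathbb Z_2$-graded algebra, $Id^{gr}(L)$ the ideal of graded identities of $L$, $c_{k,n-k}(L)=\dim P_{k,n-k}/(P_{k,n-k}\cap Id^{gr}(L))$, and $c_n^{gr}(L)=\sum_{k=0}^n\binom nk c_{k,n-k}(L)$. Superalgebra $S(t)$, $t\ge 2$: take $R=UT_t(F)$ with an involution $\ast$, either orthogonal $e_{ij}^\circ=e_{t+1-j,t+1-i}$, or (for $t=2m$) symplectic $X^s=DX^\circ D^{-1}$, $D=\mathrm{diag}(E,-E)$ with $E$ the $m\times m$ identity. With $R^\pm$ the symmetric/skew elements, $S(t)=\{\begin{pmatrix} x& y\\ z& -x^\ast\end{pmatrix}: x\in R, y\in R^+, z\in R^-\}$, even part block-diagonal, odd part block-off-diagonal, with the supercommutator product. *)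

theory Defs
  imports Complex_Main "HOL-Library.Liminf_Limsup" "HOL-Library.Extended_Real"
begin

text \<open>Square matrices over a field are represented as functions nat => nat => 'f;
  an N x N matrix is supported on indices below N.\<close>

type_synonym 'f mat = "nat \<Rightarrow> nat \<Rightarrow> 'f"

definition mmul :: "nat \<Rightarrow> 'f::field mat \<Rightarrow> 'f mat \<Rightarrow> 'f mat" where
  "mmul N a b = (\<lambda>i j. \<Sum>l<N. a i l * b l j)"

definition mneg :: "'f::field mat \<Rightarrow> 'f mat" where
  "mneg a = (\<lambda>i j. - a i j)"

text \<open>Variables are indexed by naturals 0..n-1; in P_{k,n-k} variable i is even
  (x_{i+1}) if i < k and odd (y_{i-k+1}) if k \<le> i < n.\<close>

datatype mon = Var nat | Mul mon mon

fun leaves :: "mon \<Rightarrow> nat list" where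
  "leaves (Var i) = [i]"
| "leaves (Mul a b) = leaves a @ leaves b"

definition MLmon :: "nat \<Rightarrow> mon set" where
  "MLmon n = {m. distinct (leaves m) \<and> set (leaves m) = {0..<n}}"

text \<open>The space P_{k,n-k}: linear combinations of multilinear monomials of degree n.\<close>
definition Ppoly :: "nat \<Rightarrow> (mon \<Rightarrow> 'f::field) set" where
  "Ppoly n = {f. \<forall>m. m \<notin> MLmon n \<longrightarrow> f m = 0}"

text \<open>Number of odd variables in a monomial (determines its Z2-degree).\<close>
fun oddcnt :: "nat \<Rightarrow> mon \<Rightarrow> nat" where
  "oddcnt k (Var i) = (if k \<le> i then 1 else 0)"
| "oddcnt k (Mul a b) = oddcnt k a + oddcnt k b"

text \<open>Evaluation of a monomial in an algebra of N x N matrices with the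
  supercommutator product [a,b] = ab - (-1)^{|a||b|} ba (homogeneous arguments).\<close>
fun evm :: "nat \<Rightarrow> nat \<Rightarrow> (nat \<Rightarrow> 'f::field mat) \<Rightarrow> mon \<Rightarrow> 'f mat" where
  "evm N k s (Var i) = s i"
| "evm N k s (Mul a b) = (\<lambda>i j. mmul N (evm N k s a) (evm N k s b) i j
      - (-1) ^ (oddcnt k a * oddcnt k b) * mmul N (evm N k s b) (evm N k s a) i j)"

definition evalP :: "nat \<Rightarrow> nat \<Rightarrow> nat \<Rightarrow> (nat \<Rightarrow> 'f::field mat) \<Rightarrow> (mon \<Rightarrow> 'f) \<Rightarrow> 'f mat" where
  "evalP N k n s f = (\<lambda>i j. \<Sum>m\<in>MLmon n. f m * evm N k s m i j)"

text \<open>f belongs to P_{k,n-k} \<inter> Id^gr(L), L = L0 \<oplus> L1 a superalgebra of N x N matrices.\<close>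
definition graded_identity ::
  "nat \<Rightarrow> 'f::field mat set \<Rightarrow> 'f mat set \<Rightarrow> nat \<Rightarrow> nat \<Rightarrow> (mon \<Rightarrow> 'f) \<Rightarrow> bool" where
  "graded_identity N L0 L1 k n f \<longleftrightarrow> f \<in> Ppoly n \<and>
     (\<forall>s. (\<forall>i<k. s i \<in> L0) \<and> (\<forall>i. k \<le> i \<and> i < n \<longrightarrow> s i \<in> L1)
          \<longrightarrow> evalP N k n s f = (\<lambda>i j. 0))"

definition indep_mod ::
  "nat \<Rightarrow> 'f::field mat set \<Rightarrow> 'f mat set \<Rightarrow> nat \<Rightarrow> nat \<Rightarrow> (mon \<Rightarrow> 'f) set \<Rightarrow> bool" where
  "indep_mod N L0 L1 k n B \<longleftrightarrow> B \<subseteq> Ppoly n \<and> finite B \<and>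
     (\<forall>a. graded_identity N L0 L1 k n (\<lambda>m. \<Sum>b\<in>B. a b * b m) \<longrightarrow> (\<forall>b\<in>B. a b = 0))"

text \<open>c_{k,n-k}(L) = dim P_{k,n-k} / (P_{k,n-k} \<inter> Id^gr(L)).\<close>
definition codim :: "nat \<Rightarrow> 'f::field mat set \<Rightarrow> 'f mat set \<Rightarrow> nat \<Rightarrow> nat \<Rightarrow> nat" where
  "codim N L0 L1 k n = Max {card B | B. indep_mod N L0 L1 k n B}"

definition cgr :: "nat \<Rightarrow> 'f::field mat set \<Rightarrow> 'f mat set \<Rightarrow> nat \<Rightarrow> nat" where
  "cgr N L0 L1 n = (\<Sum>k\<le>n. (n choose k) * codim N L0 L1 k n)"

definition grexp_upper :: "nat \<Rightarrow> 'f::field mat set \<Rightarrow> 'f mat set \<Rightarrow> ereal" where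
  "grexp_upper N L0 L1 = limsup (\<lambda>n. ereal (root n (real (cgr N L0 L1 n))))"

datatype invkind = Orth | Symp

definition UT :: "nat \<Rightarrow> 'f::field mat \<Rightarrow> bool" where
  "UT t x \<longleftrightarrow> (\<forall>i j. (t \<le> i \<or> t \<le> j \<or> j < i) \<longrightarrow> x i j = 0)"

text \<open>Orthogonal involution e_{ij} \<mapsto> e_{t+1-j,t+1-i} (0-indexed: (i,j) \<mapsto> (t-1-j,t-1-i)).\<close>
definition orth_inv :: "nat \<Rightarrow> 'f::field mat \<Rightarrow> 'f mat" where
  "orth_inv t x = (\<lambda>i j. if i < t \<and> j < t then x (t - 1 - j) (t - 1 - i) else 0)"

text \<open>Symplectic involution X \<mapsto> D X^o D^{-1}, D = diag(E,-E), t = 2m.\<close>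
definition dsign :: "nat \<Rightarrow> nat \<Rightarrow> 'f::field" where
  "dsign t i = (if i < t div 2 then 1 else -1)"

definition symp_inv :: "nat \<Rightarrow> 'f::field mat \<Rightarrow> 'f mat" where
  "symp_inv t x = (\<lambda>i j. dsign t i * orth_inv t x i j * dsign t j)"

definition invol :: "invkind \<Rightarrow> nat \<Rightarrow> 'f::field mat \<Rightarrow> 'f mat" where
  "invol \<iota> t = (case \<iota> of Orth \<Rightarrow> orth_inv t | Symp \<Rightarrow> symp_inv t)"

definition Rplus :: "invkind \<Rightarrow> nat \<Rightarrow> 'f::field mat set" where
  "Rplus \<iota> t = {x. UT t x \<and> invol \<iota> t x = x}"

definition Rminus :: "invkind \<Rightarrow> nat \<Rightarrow> 'f::field mat set" where
  "Rminus \<iota> t = {x. UT t x \<and> invol \<iota> t x = mneg x}"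

definition block :: "nat \<Rightarrow> 'f::field mat \<Rightarrow> 'f mat \<Rightarrow> 'f mat \<Rightarrow> 'f mat \<Rightarrow> 'f mat" where
  "block t x y z w = (\<lambda>i j.
     if i < t \<and> j < t then x i j
     else if i < t \<and> t \<le> j \<and> j < 2*t then y i (j - t)
     else if t \<le> i \<and> i < 2*t \<and> j < t then z (i - t) j
     else if t \<le> i \<and> i < 2*t \<and> t \<le> j \<and> j < 2*t then w (i - t) (j - t)
     else 0)"

definition S0 :: "invkind \<Rightarrow> nat \<Rightarrow> 'f::field mat set" where
  "S0 \<iota> t = {block t x (\<lambda>i j. 0) (\<lambda>i j. 0) (mneg (invol \<iota> t x)) | x. UT t x}"

definition S1 :: "invkind \<Rightarrow> nat \<Rightarrow> 'f::field mat set" where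
  "S1 \<iota> t = {block t (\<lambda>i j. 0) y z (\<lambda>i j. 0) | y z. y \<in> Rplus \<iota> t \<and> z \<in> Rminus \<iota> t}"

end

theory Submission
  imports Defs "HOL-Library.FuncSet"
begin

(* Give the indices 0..2t-1 of S(t) levels in 0..2t-1 such that every element of S(t) is
   upper triangular with respect to the levels. Then every element is a linear combination of
   level-preserving matrices, t of them for the even part and 2 * (t div 2) for the odd part,
   and of matrix units strictly raising the level. A product with 2t level-raising factors
   vanishes, so by multilinearity a polynomial in P_{k,n-k} is a graded identity as soon as it
   vanishes on the substitutions of these generators with fewer than 2t level-raising
   arguments. There are at most poly(n) * t^k * (2 * (t div 2))^(n-k) of them, hence
   c_n^gr <= poly(n) * (t + 2 * (t div 2))^n, and t + 2 * (t div 2) is 2t or 2t - 1. *)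

lemma evm_cong:
  "(\<And>i. i \<in> set (leaves m) \<Longrightarrow> s i = s' i) \<Longrightarrow> evm N k s m = evm N k s' m"
  by (induction m) auto

lemma mmul_linear_left:
  "mmul N (\<lambda>i j. a * X i j + Y i j) B = (\<lambda>i j. a * mmul N X B i j + mmul N Y B i j)"
  by (auto simp: mmul_def sum_distrib_left sum.distrib algebra_simps intro!: ext)

lemma mmul_linear_right:
  "mmul N B (\<lambda>i j. a * X i j + Y i j) = (\<lambda>i j. a * mmul N B X i j + mmul N B Y i j)"
  by (auto simp: mmul_def sum_distrib_left sum.distrib algebra_simps intro!: ext)

lemma evm_upd_linear:
  assumes "distinct (leaves m)" "r \<in> set (leaves m)"
  shows "evm N k (s(r := (\<lambda>i j. a * X i j + Y i j))) m =
    (\<lambda>i j. a * evm N k (s(r := X)) m i j + evm N k (s(r := Y)) m i j)"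
  using assms
proof (induction m)
  case (Var x)
  then show ?case by auto
next
  case (Mul m1 m2)
  show ?case
  proof (cases "r \<in> set (leaves m1)")
    case True
    have "evm N k (s(r := Z)) m2 = evm N k s m2" for Z
      using Mul.prems True by (intro evm_cong) auto
    moreover have "evm N k (s(r := (\<lambda>i j. a * X i j + Y i j))) m1 =
        (\<lambda>i j. a * evm N k (s(r := X)) m1 i j + evm N k (s(r := Y)) m1 i j)"
      using Mul.prems True by (intro Mul.IH(1)) auto
    ultimately show ?thesis
      by (simp only: evm.simps mmul_linear_left mmul_linear_right) (simp add: algebra_simps)
  next
    case False
    have "evm N k (s(r := Z)) m1 = evm N k s m1" for Z
      using False by (intro evm_cong) auto
    moreover have "evm N k (s(r := (\<lambda>i j. a * X i j + Y i j))) m2 =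
        (\<lambda>i j. a * evm N k (s(r := X)) m2 i j + evm N k (s(r := Y)) m2 i j)"
      using Mul.prems False by (intro Mul.IH(2)) auto
    ultimately show ?thesis
      by (simp only: evm.simps mmul_linear_left mmul_linear_right) (simp add: algebra_simps)
  qed
qed

lemma evalP_upd_linear:
  assumes "r < n"
  shows "evalP N k n (s(r := (\<lambda>i j. a * X i j + Y i j))) f =
    (\<lambda>i j. a * evalP N k n (s(r := X)) f i j + evalP N k n (s(r := Y)) f i j)"
proof (intro ext)
  fix i j
  have "f m * evm N k (s(r := (\<lambda>i j. a * X i j + Y i j))) m i j
      = a * (f m * evm N k (s(r := X)) m i j) + f m * evm N k (s(r := Y)) m i j"
    if "m \<in> MLmon n" for m
  proof -
    have "distinct (leaves m)" "r \<in> set (leaves m)" using that assms by (auto simp: MLmon_def)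
    then show ?thesis by (simp only: evm_upd_linear) (simp add: algebra_simps)
  qed
  then show "evalP N k n (s(r := (\<lambda>i j. a * X i j + Y i j))) f i j =
      a * evalP N k n (s(r := X)) f i j + evalP N k n (s(r := Y)) f i j"
    by (simp add: evalP_def sum.distrib sum_distrib_left)
qed

lemma evalP_upd_zero:
  assumes "r < n"
  shows "evalP N k n (s(r := (\<lambda>i j. 0))) f = (\<lambda>i j. 0)"
proof (intro ext)
  fix i j
  let ?E = "evalP N k n (s(r := (\<lambda>i j. 0))) f"
  have "?E i j = ?E i j + ?E i j"
    using fun_cong[OF fun_cong[OF evalP_upd_linear[OF assms, of N k s 1 "\<lambda>i j. 0" "\<lambda>i j. 0" f]]]
    by simp
  then show "?E i j = 0" by (metis add_cancel_left_right)
qed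

lemma evalP_linear_combination:
  "evalP N k n s (\<lambda>m. \<Sum>b\<in>B. a b * b m) = (\<lambda>i j. \<Sum>b\<in>B. a b * evalP N k n s b i j)"
proof (intro ext)
  fix i j
  have "(\<Sum>m\<in>MLmon n. (\<Sum>b\<in>B. a b * b m) * evm N k s m i j)
     = (\<Sum>m\<in>MLmon n. \<Sum>b\<in>B. a b * (b m * evm N k s m i j))"
    by (simp add: sum_distrib_right mult.assoc)
  also have "\<dots> = (\<Sum>b\<in>B. a b * (\<Sum>m\<in>MLmon n. b m * evm N k s m i j))"
    by (subst sum.swap) (simp add: sum_distrib_left)
  finally show "evalP N k n s (\<lambda>m. \<Sum>b\<in>B. a b * b m) i j = (\<Sum>b\<in>B. a b * evalP N k n s b i j)"
    by (simp add: evalP_def)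
qed

lemma evalP_restrict: "evalP N k n (restrict s {..<n}) f = evalP N k n s f"
  unfolding evalP_def
  by (intro ext sum.cong refl arg_cong2[where f = "(*)"] fun_cong[OF fun_cong[OF evm_cong]])
    (auto simp: MLmon_def)

inductive_set mspan :: "'f::field mat set \<Rightarrow> 'f mat set" for G where
  zero: "(\<lambda>i j. 0) \<in> mspan G"
| add: "g \<in> G \<Longrightarrow> M \<in> mspan G \<Longrightarrow> (\<lambda>i j. c * g i j + M i j) \<in> mspan G"

lemma mspan_mono: "M \<in> mspan G \<Longrightarrow> G \<subseteq> H \<Longrightarrow> M \<in> mspan H"
  by (induction rule: mspan.induct) (auto intro: mspan.intros)

lemma mspan_add:
  assumes "X \<in> mspan G" "Y \<in> mspan G"
  shows "(\<lambda>i j. X i j + Y i j) \<in> mspan G"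
  using assms
proof (induction rule: mspan.induct)
  case zero
  then show ?case by simp
next
  case (add g M c)
  then show ?case
    using mspan.add[OF add.hyps(1) add.IH[OF add.prems], of c] by (simp add: add.assoc)
qed

lemma mspan_sum:
  assumes "finite A" "\<phi> ` A \<subseteq> G"
  shows "(\<lambda>i j. \<Sum>a\<in>A. c a * \<phi> a i j) \<in> mspan G"
  using assms by (induction A rule: finite_induct) (auto intro: mspan.intros)

definition unit_mat :: "nat \<Rightarrow> nat \<Rightarrow> 'f::field mat" where
  "unit_mat p q = (\<lambda>i j. if i = p \<and> j = q then 1 else 0)"

lemma mspan_unit_mats:
  assumes "finite P" "\<And>i j. M i j \<noteq> 0 \<Longrightarrow> (i, j) \<in> P"
  shows "M \<in> mspan ((\<lambda>(p, q). unit_mat p q) ` P)"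
proof -
  let ?c = "\<lambda>(p, q). M p q" and ?\<phi> = "\<lambda>(p, q). unit_mat p q"
  have "(\<Sum>x\<in>P. ?c x * ?\<phi> x i j) = M i j" for i j
  proof -
    have "(\<Sum>x\<in>P. ?c x * ?\<phi> x i j) = (\<Sum>x\<in>P. if x = (i, j) then M i j else 0)"
      by (rule sum.cong) (auto simp: unit_mat_def split: if_splits)
    also have "\<dots> = M i j" using assms by auto
    finally show ?thesis .
  qed
  moreover have "(\<lambda>i j. \<Sum>x\<in>P. ?c x * ?\<phi> x i j) \<in> mspan (?\<phi> ` P)"
    using assms(1) by (intro mspan_sum) auto
  ultimately show ?thesis by simp
qed

lemma mspan_split_unit_mats:
  assumes "D \<in> mspan A" "finite P" "\<And>i j. M i j \<noteq> D i j \<Longrightarrow> (i, j) \<in> P"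
  shows "M \<in> mspan (A \<union> (\<lambda>(p, q). unit_mat p q) ` P)"
proof -
  let ?U = "(\<lambda>(p, q). unit_mat p q) ` P"
  have "(\<lambda>i j. M i j - D i j) \<in> mspan ?U"
    using assms(2,3) by (intro mspan_unit_mats) auto
  then have "(\<lambda>i j. M i j - D i j) \<in> mspan (A \<union> ?U)"
    by (rule mspan_mono) simp
  moreover have "D \<in> mspan (A \<union> ?U)"
    using assms(1) by (rule mspan_mono) simp
  ultimately have "(\<lambda>i j. D i j + (M i j - D i j)) \<in> mspan (A \<union> ?U)"
    by (intro mspan_add)
  then show ?thesis by simp
qed

lemma evalP_upd_mspan:
  assumes "r < n" "\<And>g. g \<in> G \<Longrightarrow> evalP N k n (s(r := g)) f = (\<lambda>i j. 0)" "M \<in> mspan G"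
  shows "evalP N k n (s(r := M)) f = (\<lambda>i j. 0)"
  using assms(3)
proof (induction rule: mspan.induct)
  case zero
  show ?case by (rule evalP_upd_zero[OF assms(1)])
next
  case (add g M c)
  have "evalP N k n (s(r := (\<lambda>i j. c * g i j + M i j))) f =
      (\<lambda>i j. c * evalP N k n (s(r := g)) f i j + evalP N k n (s(r := M)) f i j)"
    by (rule evalP_upd_linear[OF assms(1)])
  then show ?case by (simp only: add.IH assms(2)[OF add.hyps(1)]) simp
qed

lemma evalP_zero_on_mspans:
  assumes gens: "\<And>s. \<forall>i<n. s i \<in> G i \<Longrightarrow> evalP N k n s f = (\<lambda>i j. 0)"
    and s: "\<forall>i<n. s i \<in> mspan (G i)"
  shows "evalP N k n s f = (\<lambda>i j. 0)"
proof -
  have "\<forall>s. (\<forall>i<n. s i \<in> (if i < r then mspan (G i) else G i)) \<longrightarrow> evalP N k n s f = (\<lambda>i j. 0)"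
    for r
  proof (induction r)
    case 0
    then show ?case using gens by simp
  next
    case (Suc r)
    show ?case
    proof (intro allI impI)
      fix s assume hs: "\<forall>i<n. s i \<in> (if i < Suc r then mspan (G i) else G i)"
      show "evalP N k n s f = (\<lambda>i j. 0)"
      proof (cases "r < n")
        case False
        then have "\<forall>i<n. s i \<in> (if i < r then mspan (G i) else G i)"
          using hs by auto
        then show ?thesis using Suc.IH by blast
      next
        case True
        have upd: "evalP N k n (s(r := g)) f = (\<lambda>i j. 0)" if "g \<in> G r" for g
        proof -
          have "\<forall>i<n. (s(r := g)) i \<in> (if i < r then mspan (G i) else G i)"
            using that hs by auto
          then show ?thesis using Suc.IH by blast
        qed
        moreover have "s r \<in> mspan (G r)"
          using True hs by auto
        ultimately have "evalP N k n (s(r := s r)) f = (\<lambda>i j. 0)"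
          by (rule evalP_upd_mspan[OF True])
        then show ?thesis by simp
      qed
    qed
  qed
  from this[of n] s show ?thesis by auto
qed

section \<open>Matrices raising a level function\<close>

definition raises_level :: "nat \<Rightarrow> (nat \<Rightarrow> nat) \<Rightarrow> nat \<Rightarrow> 'f::field mat \<Rightarrow> bool" where
  "raises_level N lv r M \<longleftrightarrow> (\<forall>i j. M i j \<noteq> 0 \<longrightarrow> i < N \<and> j < N \<and> lv i + r \<le> lv j)"

lemma raises_level_mmul:
  assumes "raises_level N lv ra A" "raises_level N lv rb B"
  shows "raises_level N lv (ra + rb) (mmul N A B)"
  unfolding raises_level_def
proof (intro allI impI)
  fix i j assume "mmul N A B i j \<noteq> 0"
  then obtain l where "A i l * B l j \<noteq> 0"
    unfolding mmul_def by (meson sum.neutral)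
  then have "A i l \<noteq> 0" "B l j \<noteq> 0" by auto
  with assms show "i < N \<and> j < N \<and> lv i + (ra + rb) \<le> lv j"
    unfolding raises_level_def by fastforce
qed

lemma raises_level_diff:
  "raises_level N lv r A \<Longrightarrow> raises_level N lv r B \<Longrightarrow> raises_level N lv r (\<lambda>i j. A i j - c * B i j)"
  unfolding raises_level_def by (metis diff_zero mult_zero_right)

lemma evm_raises_level:
  assumes "\<And>i. i \<in> set (leaves m) \<Longrightarrow> raises_level N lv (w i) (s i)"
  shows "raises_level N lv (sum_list (map w (leaves m))) (evm N k s m)"
  using assms
proof (induction m)
  case (Var x)
  then show ?case by simp
next
  case (Mul m1 m2)
  let ?w1 = "sum_list (map w (leaves m1))" and ?w2 = "sum_list (map w (leaves m2))"
  have "raises_level N lv ?w1 (evm N k s m1)" "raises_level N lv ?w2 (evm N k s m2)"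
    using Mul by auto
  then have "raises_level N lv (?w1 + ?w2) (mmul N (evm N k s m1) (evm N k s m2))"
    "raises_level N lv (?w2 + ?w1) (mmul N (evm N k s m2) (evm N k s m1))"
    by (simp_all add: raises_level_mmul)
  then show ?case using raises_level_diff by (simp add: add.commute)
qed

lemma raises_level_zero:
  assumes "raises_level N lv r M" "\<And>p. p < N \<Longrightarrow> lv p < r"
  shows "M = (\<lambda>i j. 0)"
proof (intro ext)
  fix i j
  show "M i j = 0"
  proof (rule ccontr)
    assume "M i j \<noteq> 0"
    with assms(1) have "j < N" "lv i + r \<le> lv j" unfolding raises_level_def by auto
    with assms(2)[of j] show False by linarith
  qed
qed

lemma sum_list_leaves_MLmon: "m \<in> MLmon n \<Longrightarrow> sum_list (map w (leaves m)) = (\<Sum>i<n. w i)"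
  by (simp add: MLmon_def sum_list_distinct_conv_sum_set atLeast0LessThan)

section \<open>Codimension bounds from test substitutions\<close>

lemma independent_eliminate:
  fixes v :: "'b \<Rightarrow> 'd \<Rightarrow> 'f::field"
  assumes "finite B" "b0 \<in> B" "v b0 d \<noteq> 0"
    and indep: "\<And>a. \<forall>e\<in>insert d D. (\<Sum>b\<in>B. a b * v b e) = 0 \<Longrightarrow> \<forall>b\<in>B. a b = 0"
    and "\<forall>e\<in>D. (\<Sum>b\<in>B - {b0}. a' b * (v b e - (v b d / v b0 d) * v b0 e)) = 0"
  shows "\<forall>b\<in>B - {b0}. a' b = 0"
proof -
  define c where "c = (\<Sum>b\<in>B - {b0}. a' b * (v b d / v b0 d))"
  define a where "a b = (if b = b0 then - c else a' b)" for b
  have eq: "(\<Sum>b\<in>B. a b * v b e) = (\<Sum>b\<in>B - {b0}. a' b * (v b e - (v b d / v b0 d) * v b0 e))" for e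
  proof -
    have "(\<Sum>b\<in>B. a b * v b e) = a b0 * v b0 e + (\<Sum>b\<in>B - {b0}. a' b * v b e)"
      using assms(1,2) by (simp add: sum.remove a_def)
    moreover have "(\<Sum>b\<in>B - {b0}. a' b * (v b e - (v b d / v b0 d) * v b0 e))
        = (\<Sum>b\<in>B - {b0}. a' b * v b e) - c * v b0 e"
      by (simp add: c_def right_diff_distrib sum_subtractf sum_distrib_right mult.assoc)
    ultimately show ?thesis by (simp add: a_def)
  qed
  have "(\<Sum>b\<in>B - {b0}. a' b * (v b d - (v b d / v b0 d) * v b0 d)) = 0"
    using assms(3) by simp
  with assms(5) eq have "\<forall>e\<in>insert d D. (\<Sum>b\<in>B. a b * v b e) = 0" by auto
  then have "\<forall>b\<in>B. a b = 0" by (rule indep)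
  then show ?thesis by (metis DiffD1 DiffD2 a_def singletonI)
qed

lemma card_le_card_if_independent:
  fixes v :: "'b \<Rightarrow> 'd \<Rightarrow> 'f::field"
  assumes "finite D" "finite B"
    and "\<And>a. \<forall>d\<in>D. (\<Sum>b\<in>B. a b * v b d) = 0 \<Longrightarrow> \<forall>b\<in>B. a b = 0"
  shows "card B \<le> card D"
  using assms
proof (induction D arbitrary: B v rule: finite_induct)
  case empty
  from empty.prems(2)[of "\<lambda>_. 1"] have "B = {}" by auto
  then show ?case by simp
next
  case (insert d D)
  show ?case
  proof (cases "\<forall>b\<in>B. v b d = 0")
    case True
    have "card B \<le> card D"
    proof (rule insert.IH[OF insert.prems(1)])
      fix a assume "\<forall>e\<in>D. (\<Sum>b\<in>B. a b * v b e) = 0"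
      then have "\<forall>e\<in>insert d D. (\<Sum>b\<in>B. a b * v b e) = 0" using True by auto
      then show "\<forall>b\<in>B. a b = 0" by (rule insert.prems(2))
    qed
    then show ?thesis using insert.hyps by simp
  next
    case False
    then obtain b0 where b0: "b0 \<in> B" "v b0 d \<noteq> 0" by auto
    have "card (B - {b0}) \<le> card D"
      using insert.prems b0
      by (intro insert.IH[where v = "\<lambda>b e. v b e - (v b d / v b0 d) * v b0 e"] independent_eliminate)
        auto
    moreover have "card B = Suc (card (B - {b0}))"
      using insert.prems(1) b0(1) by (metis card_Suc_Diff1)
    ultimately show ?thesis using insert.hyps by simp
  qed
qed

lemma Ppoly_linear_combination:
  "B \<subseteq> Ppoly n \<Longrightarrow> (\<lambda>m. \<Sum>b\<in>B. a b * b m) \<in> Ppoly n"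
  unfolding Ppoly_def by (auto intro!: sum.neutral)

lemma codim_le_card_tests:
  fixes E :: "(nat \<Rightarrow> 'f::field mat) set"
  assumes "finite E"
    and "\<And>f. f \<in> Ppoly n \<Longrightarrow> \<forall>s\<in>E. \<forall>i<N. \<forall>j<N. evalP N k n s f i j = 0
      \<Longrightarrow> graded_identity N L0 L1 k n f"
  shows "codim N L0 L1 k n \<le> card E * N * N"
proof -
  let ?D = "E \<times> {..<N} \<times> {..<N}"
  have bound: "card B \<le> card E * N * N" if "indep_mod N L0 L1 k n B" for B
  proof -
    have B: "B \<subseteq> Ppoly n" "finite B"
      and ind: "\<And>a. graded_identity N L0 L1 k n (\<lambda>m. \<Sum>b\<in>B. a b * b m) \<Longrightarrow> \<forall>b\<in>B. a b = 0"
      using that unfolding indep_mod_def by auto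
    have "card B \<le> card ?D"
    proof (rule card_le_card_if_independent
        [where v = "\<lambda>b (s, i, j). evalP N k n s b i j"])
      show "finite ?D" using assms(1) by simp
      show "finite B" by (rule B(2))
      fix a assume "\<forall>d\<in>?D. (\<Sum>b\<in>B. a b * (case d of (s, i, j) \<Rightarrow> evalP N k n s b i j)) = 0"
      then have "\<forall>s\<in>E. \<forall>i<N. \<forall>j<N. evalP N k n s (\<lambda>m. \<Sum>b\<in>B. a b * b m) i j = 0"
        by (auto simp: evalP_linear_combination)
      then show "\<forall>b\<in>B. a b = 0"
        using B(1) by (intro ind assms(2) Ppoly_linear_combination)
    qed
    then show ?thesis by (simp add: card_cartesian_product)
  qed
  have "indep_mod N L0 L1 k n {}" unfolding indep_mod_def by simp
  then show ?thesis
    unfolding codim_def using bound by (intro Max.boundedI) (auto intro: finite_subset[of _ "{..card E * N * N}"])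
qed

section \<open>Spanning sets for S(t)\<close>

text \<open>For odd \<open>t\<close> the middle index of the second block gets the odd level \<open>t\<close>, so that
  the unpaired middle diagonal entry of the \<open>y\<close>-block raises the level: this is where
  the bound drops from \<open>2t\<close> to \<open>2t - 1\<close>.\<close>

definition level :: "nat \<Rightarrow> nat \<Rightarrow> nat" where
  "level t p = 2 * (if p < t then p else p - t) + (if odd t \<and> p = t + t div 2 then 1 else 0)"

lemma level_less: "p < 2*t \<Longrightarrow> level t p < 2*t"
  unfolding level_def by (auto split: if_splits; presburger)

lemma level_low: "p < t \<Longrightarrow> level t p = 2 * p"
  unfolding level_def by auto

lemma level_high: "t \<le> p \<Longrightarrow> 2 * (p - t) \<le> level t p \<and> level t p \<le> 2 * (p - t) + 1"
  unfolding level_def by auto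

lemma level_high_eq: "l < t \<Longrightarrow> 2 * l + 1 \<noteq> t \<Longrightarrow> level t (l + t) = 2 * l"
  unfolding level_def by auto

lemma level_mid: "odd t \<Longrightarrow> level t (t + t div 2) = 2 * (t div 2) + 1"
  unfolding level_def by auto

lemma less_half_iff: "l < t div 2 \<longleftrightarrow> 2 * l + 1 < (t::nat)"
  by presburger

definition raising_pos :: "nat \<Rightarrow> (nat \<times> nat) set" where
  "raising_pos t = {(p, q). p < 2*t \<and> q < 2*t \<and> level t p < level t q}"

lemma finite_raising_pos: "finite (raising_pos t)"
  by (rule finite_subset[of _ "{..<2*t} \<times> {..<2*t}"]) (auto simp: raising_pos_def)

text \<open>With \<open>l' = t - 1 - l\<close> (indices from 0), these are the elements of \<open>S(t)\<close> given by
  \<open>x = e_ll\<close>, \<open>y = e_ll + e_l'l'\<close> and \<open>z = e_ll - e_l'l'\<close>.\<close>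

definition even_diag :: "nat \<Rightarrow> nat \<Rightarrow> 'f::field mat" where
  "even_diag t l = (\<lambda>i j. if i = l \<and> j = l then 1 else if i = 2*t-1-l \<and> j = i then -1 else 0)"

definition odd_up :: "nat \<Rightarrow> nat \<Rightarrow> 'f::field mat" where
  "odd_up t l = (\<lambda>i j. if (i = l \<and> j = l + t) \<or> (i = t-1-l \<and> j = 2*t-1-l) then 1 else 0)"

definition odd_down :: "nat \<Rightarrow> nat \<Rightarrow> 'f::field mat" where
  "odd_down t l = (\<lambda>i j. if i = l + t \<and> j = l then 1 else if i = 2*t-1-l \<and> j = t-1-l then -1 else 0)"

definition raising_units :: "nat \<Rightarrow> 'f::field mat set" where
  "raising_units t = (\<lambda>(p, q). unit_mat p q) ` raising_pos t"

definition even_diags :: "nat \<Rightarrow> 'f::field mat set" where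
  "even_diags t = even_diag t ` {..<t}"

definition odd_diags :: "nat \<Rightarrow> 'f::field mat set" where
  "odd_diags t = odd_up t ` {..<t div 2} \<union> odd_down t ` {..<t div 2}"

definition even_diag_part :: "nat \<Rightarrow> 'f::field mat \<Rightarrow> 'f mat" where
  "even_diag_part t x = (\<lambda>i j. if i = j \<and> i < t then x i i
     else if i = j \<and> t \<le> i \<and> i < 2*t then - x (2*t-1-i) (2*t-1-i) else 0)"

definition odd_up_part :: "nat \<Rightarrow> 'f::field mat \<Rightarrow> 'f mat" where
  "odd_up_part t y = (\<lambda>i j. if i < t \<and> j = i + t then
        (if 2*i+1 < t then y i i else if t < 2*i+1 then y (t-1-i) (t-1-i) else 0) else 0)"

definition odd_down_part :: "nat \<Rightarrow> 'f::field mat \<Rightarrow> 'f mat" where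
  "odd_down_part t z = (\<lambda>i j. if j < t \<and> i = j + t then
        (if 2*j+1 < t then z j j else if t < 2*j+1 then - z (t-1-j) (t-1-j) else 0) else 0)"

lemma invol_diag:
  fixes x :: "'f::field mat"
  shows "a < t \<Longrightarrow> invol \<iota> t x a a = x (t - 1 - a) (t - 1 - a)"
proof -
  have "dsign t a * dsign t a = (1::'f)" for a by (simp add: dsign_def)
  then show "a < t \<Longrightarrow> invol \<iota> t x a a = x (t - 1 - a) (t - 1 - a)"
    unfolding invol_def orth_inv_def symp_inv_def
    by (cases \<iota>) (auto simp: mult.commute[of "dsign t a"] mult.assoc)
qed

lemma invol_nonzero:
  "a < t \<Longrightarrow> b < t \<Longrightarrow> invol \<iota> t x a b \<noteq> 0 \<Longrightarrow> x (t - 1 - b) (t - 1 - a) \<noteq> 0"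
  unfolding invol_def orth_inv_def symp_inv_def by (cases \<iota>) auto

lemma UT_nonzero: "UT t x \<Longrightarrow> x i j \<noteq> 0 \<Longrightarrow> i \<le> j"
  unfolding UT_def by (meson not_le)

lemma S0_entry_raising:
  assumes "UT t x" "i \<noteq> j \<or> \<not> i < 2*t"
    and "block t x (\<lambda>i j. 0) (\<lambda>i j. 0) (mneg (invol \<iota> t x)) i j \<noteq> (0::'f::field)"
  shows "(i, j) \<in> raising_pos t"
proof -
  consider (a) "i < t" "j < t" | (b) "t \<le> i" "i < 2*t" "t \<le> j" "j < 2*t"
    | (c) "(i < t \<and> t \<le> j) \<or> (t \<le> i \<and> j < t) \<or> 2*t \<le> i \<or> 2*t \<le> j" by linarith
  then show ?thesis
  proof cases
    case a
    then have "x i j \<noteq> 0" using assms(3) by (simp add: block_def)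
    with assms(1) have "i \<le> j" by (rule UT_nonzero)
    with assms(2) a show ?thesis by (simp add: raising_pos_def level_low)
  next
    case b
    then have "invol \<iota> t x (i - t) (j - t) \<noteq> 0" using assms(3) by (simp add: block_def mneg_def)
    then have "x (t - 1 - (j - t)) (t - 1 - (i - t)) \<noteq> 0" using b by (intro invol_nonzero) auto
    with assms(1) have "t - 1 - (j - t) \<le> t - 1 - (i - t)" by (rule UT_nonzero)
    with assms(2) b have "i < j" by linarith
    with b level_high[of t i] level_high[of t j] show ?thesis
      unfolding raising_pos_def by auto
  next
    case c
    then show ?thesis using assms(3) by (auto simp: block_def split: if_splits)
  qed
qed

lemma S0_diag:
  assumes "i < 2*t"
  shows "block t x (\<lambda>i j. 0) (\<lambda>i j. 0) (mneg (invol \<iota> t x)) i i = even_diag_part t x i i"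
proof (cases "i < t")
  case True
  then show ?thesis by (simp add: block_def even_diag_part_def)
next
  case False
  then have "i - t < t" "t - 1 - (i - t) = 2*t - 1 - i" using assms by auto
  then show ?thesis using False assms
    by (simp add: block_def even_diag_part_def mneg_def invol_diag)
qed

lemma S0_minus_diag_part_raising:
  fixes x :: "'f::field mat"
  assumes "UT t x"
    and "block t x (\<lambda>i j. 0) (\<lambda>i j. 0) (mneg (invol \<iota> t x)) i j \<noteq> even_diag_part t x i j"
  shows "(i, j) \<in> raising_pos t"
proof (cases "i = j \<and> i < 2*t")
  case True
  then show ?thesis using assms(2) S0_diag[of i t x \<iota>] by simp
next
  case False
  then have "even_diag_part t x i j = 0" unfolding even_diag_part_def by auto
  then show ?thesis using assms False S0_entry_raising[of t x i j \<iota>] by auto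
qed

lemma Rplus_diag: "y \<in> Rplus \<iota> t \<Longrightarrow> a < t \<Longrightarrow> y (t-1-a) (t-1-a) = y a a"
  unfolding Rplus_def using invol_diag[of a t \<iota> y] by (metis (mono_tags) mem_Collect_eq)

lemma Rminus_diag: "z \<in> Rminus \<iota> t \<Longrightarrow> a < t \<Longrightarrow> z (t-1-a) (t-1-a) = - z a a"
  unfolding Rminus_def using invol_diag[of a t \<iota> z] by (auto simp: mneg_def)

lemma S1_up_entry_raising:
  assumes "y \<in> Rplus \<iota> t" "i < t" "t \<le> j" "j < 2*t" "y i (j - t) \<noteq> odd_up_part t y i j"
  shows "(i, j) \<in> raising_pos t"
proof (cases "j = i + t")
  case True
  have "y (t-1-i) (t-1-i) = y i i" using Rplus_diag[OF assms(1)] assms(2) by simp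
  then have "2*i+1 = t" using assms(2,5) True by (auto simp: odd_up_part_def split: if_splits)
  then have "odd t" "i = t div 2" by presburger+
  then show ?thesis
    using assms(2) True level_low[of i t] level_mid[of t] by (simp add: raising_pos_def add.commute)
next
  case False
  then have "y i (j - t) \<noteq> 0" using assms(5) by (auto simp: odd_up_part_def)
  with assms(1) have "i \<le> j - t" by (auto simp: Rplus_def intro: UT_nonzero)
  with False assms(3) have "i < j - t" by linarith
  then show ?thesis using assms(2-4) level_low[of i t] level_high[of t j]
    by (simp add: raising_pos_def)
qed

lemma S1_down_entry_raising:
  fixes z :: "'f::field_char_0 mat"
  assumes "z \<in> Rminus \<iota> t" "j < t" "t \<le> i" "i < 2*t" "z (i - t) j \<noteq> odd_down_part t z i j"
  shows "(i, j) \<in> raising_pos t"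
proof (cases "i = j + t")
  case True
  have zd: "z (t-1-j) (t-1-j) = - z j j" using Rminus_diag[OF assms(1)] assms(2) by simp
  then have "2*j+1 = t" using assms(2,5) True by (auto simp: odd_down_part_def split: if_splits)
  then have "t - 1 - j = j" by simp
  \<comment> \<open>the middle diagonal entry of a skew element vanishes in characteristic 0\<close>
  then have "z j j = 0" using zd by simp
  then show ?thesis using assms(5) True \<open>2*j+1 = t\<close> by (simp add: odd_down_part_def)
next
  case False
  then have "z (i - t) j \<noteq> 0" using assms(5) by (auto simp: odd_down_part_def)
  with assms(1) have "i - t \<le> j" by (auto simp: Rminus_def intro: UT_nonzero)
  with False assms(3) have "i - t < j" by linarith
  then show ?thesis using assms(2-4) level_low[of j t] level_high[of t i]
    by (simp add: raising_pos_def)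
qed

lemma S1_minus_diag_part_raising:
  fixes y z :: "'f::field_char_0 mat"
  assumes "y \<in> Rplus \<iota> t" "z \<in> Rminus \<iota> t"
    and "block t (\<lambda>i j. 0) y z (\<lambda>i j. 0) i j \<noteq> odd_up_part t y i j + odd_down_part t z i j"
  shows "(i, j) \<in> raising_pos t"
proof -
  consider (up) "i < t" "t \<le> j" "j < 2*t" | (down) "t \<le> i" "i < 2*t" "j < t"
    | (other) "(i < t \<and> j < t) \<or> (t \<le> i \<and> t \<le> j) \<or> 2*t \<le> i \<or> 2*t \<le> j" by linarith
  then show ?thesis
  proof cases
    case up
    then show ?thesis using assms(3)
      by (intro S1_up_entry_raising[OF assms(1)]) (auto simp: block_def odd_down_part_def)
  next
    case down
    then show ?thesis using assms(3)
      by (intro S1_down_entry_raising[OF assms(2)]) (auto simp: block_def odd_up_part_def)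
  next
    case other
    then show ?thesis using assms(3)
      by (auto simp: block_def odd_up_part_def odd_down_part_def split: if_splits)
  qed
qed

lemma even_diag_term:
  assumes "l < t"
  shows "x l l * even_diag t l i j = (if l = (if i < t then i else 2*t-1-i) then even_diag_part t x i j else 0)"
proof -
  consider (low) "i = j" "i < t" | (high) "i = j" "t \<le> i" "i < 2*t" | (other) "i \<noteq> j \<or> 2*t \<le> i"
    by linarith
  then show ?thesis
  proof cases
    case low
    have "i \<noteq> 2*t-1-l" using assms low by linarith
    then show ?thesis using low by (auto simp: even_diag_def even_diag_part_def)
  next
    case high
    have "i \<noteq> l" "i = 2*t-1-l \<longleftrightarrow> l = 2*t-1-i" using assms high by linarith+
    then show ?thesis using high by (auto simp: even_diag_def even_diag_part_def)
  next
    case other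
    have "\<not> (i = l \<and> j = l)" "\<not> (i = 2*t-1-l \<and> j = i)" using other assms by linarith+
    then have "even_diag t l i j = (0::'a)" by (simp add: even_diag_def)
    moreover have "even_diag_part t x i j = 0" using other by (auto simp: even_diag_part_def)
    ultimately show ?thesis by simp
  qed
qed

lemma sum_even_diag: "(\<Sum>l<t. x l l * even_diag t l i j) = even_diag_part t x i j"
proof -
  define a where "a = (if i < t then i else 2*t-1-i)"
  have "(\<Sum>l<t. x l l * even_diag t l i j) = (\<Sum>l<t. if l = a then even_diag_part t x i j else 0)"
    by (rule sum.cong) (simp_all add: a_def even_diag_term)
  also have "\<dots> = even_diag_part t x i j"
    by (auto simp: a_def even_diag_part_def)
  finally show ?thesis .
qed

lemma odd_up_term:
  assumes "2*l+1 < t"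
  shows "y l l * odd_up t l i j = (if l = (if 2*i+1 < t then i else t-1-i) then odd_up_part t y i j else 0)"
proof -
  consider (low) "i < t" "j = i + t" "2*i+1 < t" | (high) "i < t" "j = i + t" "t < 2*i+1"
    | (other) "\<not> (i < t \<and> j = i + t) \<or> 2*i+1 = t" by linarith
  then show ?thesis
  proof cases
    case low
    have "\<not> (i = t-1-l \<and> j = 2*t-1-l)" using assms low by linarith
    then show ?thesis using low by (auto simp: odd_up_def odd_up_part_def)
  next
    case high
    have "\<not> (i = l \<and> j = l + t)" "(i = t-1-l \<and> j = 2*t-1-l) \<longleftrightarrow> l = t-1-i"
      using assms high by linarith+
    then show ?thesis using high by (auto simp: odd_up_def odd_up_part_def)
  next
    case other
    have "\<not> (i = l \<and> j = l + t)" "\<not> (i = t-1-l \<and> j = 2*t-1-l)" using assms other by linarith+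
    then have "odd_up t l i j = (0::'a)" by (simp add: odd_up_def)
    moreover have "odd_up_part t y i j = 0" using other by (auto simp: odd_up_part_def)
    ultimately show ?thesis by simp
  qed
qed

lemma odd_down_term:
  assumes "2*l+1 < t"
  shows "z l l * odd_down t l i j = (if l = (if 2*j+1 < t then j else t-1-j) then odd_down_part t z i j else 0)"
proof -
  consider (low) "j < t" "i = j + t" "2*j+1 < t" | (high) "j < t" "i = j + t" "t < 2*j+1"
    | (other) "\<not> (j < t \<and> i = j + t) \<or> 2*j+1 = t" by linarith
  then show ?thesis
  proof cases
    case low
    have "\<not> (i = 2*t-1-l \<and> j = t-1-l)" using assms low by linarith
    then show ?thesis using low by (auto simp: odd_down_def odd_down_part_def)
  next
    case high
    have "\<not> (i = l + t \<and> j = l)" "(i = 2*t-1-l \<and> j = t-1-l) \<longleftrightarrow> l = t-1-j"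
      using assms high by linarith+
    then show ?thesis using high by (auto simp: odd_down_def odd_down_part_def)
  next
    case other
    have "\<not> (i = l + t \<and> j = l)" "\<not> (i = 2*t-1-l \<and> j = t-1-l)" using assms other by linarith+
    then have "odd_down t l i j = (0::'a)" by (simp add: odd_down_def)
    moreover have "odd_down_part t z i j = 0" using other by (auto simp: odd_down_part_def)
    ultimately show ?thesis by simp
  qed
qed

lemma sum_odd_up: "(\<Sum>l<t div 2. y l l * odd_up t l i j) = odd_up_part t y i j"
proof -
  define a where "a = (if 2*i+1 < t then i else t-1-i)"
  have "(\<Sum>l<t div 2. y l l * odd_up t l i j) = (\<Sum>l<t div 2. if l = a then odd_up_part t y i j else 0)"
    by (rule sum.cong) (simp_all add: a_def odd_up_term less_half_iff)
  also have "\<dots> = odd_up_part t y i j"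
    by (auto simp: a_def odd_up_part_def less_half_iff)
  finally show ?thesis .
qed

lemma sum_odd_down: "(\<Sum>l<t div 2. z l l * odd_down t l i j) = odd_down_part t z i j"
proof -
  define a where "a = (if 2*j+1 < t then j else t-1-j)"
  have "(\<Sum>l<t div 2. z l l * odd_down t l i j) = (\<Sum>l<t div 2. if l = a then odd_down_part t z i j else 0)"
    by (rule sum.cong) (simp_all add: a_def odd_down_term less_half_iff)
  also have "\<dots> = odd_down_part t z i j"
    by (auto simp: a_def odd_down_part_def less_half_iff)
  finally show ?thesis .
qed

lemma S0_subset_mspan: "(S0 \<iota> t :: 'f::field mat set) \<subseteq> mspan (even_diags t \<union> raising_units t)"
proof
  fix M :: "'f mat" assume "M \<in> S0 \<iota> t"
  then obtain x where x: "UT t x" "M = block t x (\<lambda>i j. 0) (\<lambda>i j. 0) (mneg (invol \<iota> t x))"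
    unfolding S0_def by auto
  have "(\<lambda>i j. \<Sum>l<t. x l l * even_diag t l i j) \<in> mspan (even_diags t)"
    unfolding even_diags_def by (intro mspan_sum) auto
  then have "even_diag_part t x \<in> mspan (even_diags t)"
    by (simp add: sum_even_diag)
  then show "M \<in> mspan (even_diags t \<union> raising_units t)"
    unfolding raising_units_def
  proof (rule mspan_split_unit_mats[OF _ finite_raising_pos])
    fix i j assume "M i j \<noteq> even_diag_part t x i j"
    with x show "(i, j) \<in> raising_pos t" by (simp add: S0_minus_diag_part_raising)
  qed
qed

lemma S1_subset_mspan: "(S1 \<iota> t :: 'f::field_char_0 mat set) \<subseteq> mspan (odd_diags t \<union> raising_units t)"
proof
  fix M :: "'f mat" assume "M \<in> S1 \<iota> t"
  then obtain y z where yz: "y \<in> Rplus \<iota> t" "z \<in> Rminus \<iota> t" "M = block t (\<lambda>i j. 0) y z (\<lambda>i j. 0)"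
    unfolding S1_def by auto
  have "(\<lambda>i j. \<Sum>l<t div 2. y l l * odd_up t l i j) \<in> mspan (odd_diags t)"
    "(\<lambda>i j. \<Sum>l<t div 2. z l l * odd_down t l i j) \<in> mspan (odd_diags t)"
    unfolding odd_diags_def by (intro mspan_sum; auto)+
  then have "(\<lambda>i j. odd_up_part t y i j + odd_down_part t z i j) \<in> mspan (odd_diags t)"
    by (simp add: sum_odd_up sum_odd_down mspan_add)
  then show "M \<in> mspan (odd_diags t \<union> raising_units t)"
    unfolding raising_units_def
  proof (rule mspan_split_unit_mats[OF _ finite_raising_pos])
    fix i j assume "M i j \<noteq> odd_up_part t y i j + odd_down_part t z i j"
    with yz show "(i, j) \<in> raising_pos t" by (simp add: S1_minus_diag_part_raising)
  qed
qed

lemma raising_units_raise: "g \<in> raising_units t \<Longrightarrow> raises_level (2*t) (level t) 1 g"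
  unfolding raising_units_def raising_pos_def raises_level_def unit_mat_def
  by (auto split: if_splits)

lemma even_diags_raise: "g \<in> even_diags t \<Longrightarrow> raises_level (2*t) (level t) 0 g"
  unfolding even_diags_def raises_level_def even_diag_def by (auto split: if_split_asm)

lemma odd_diags_raise:
  assumes "g \<in> odd_diags t"
  shows "raises_level (2*t) (level t) 0 g"
proof -
  obtain l where "l < t div 2" and g: "g = odd_up t l \<or> g = odd_down t l"
    using assms unfolding odd_diags_def by auto
  then have l: "2*l+1 < t" by (simp add: less_half_iff)
  define l' where "l' = t-1-l"
  have l': "l' < t" "l' + t = 2*t-1-l" "2*l'+1 \<noteq> t" using l by (simp_all add: l'_def)
  have levels: "level t l = 2*l" "level t (l + t) = 2*l" "level t l' = 2*l'" "level t (2*t-1-l) = 2*l'"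
    using l l' level_high_eq[of l' t] by (simp_all add: level_low level_high_eq)
  have "raises_level (2*t) (level t) 0 (odd_up t l)"
    unfolding raises_level_def odd_up_def l'_def[symmetric] using l l' levels by auto
  moreover have "raises_level (2*t) (level t) 0 (odd_down t l)"
    unfolding raises_level_def odd_down_def l'_def[symmetric] using l l' levels
    by (auto split: if_split_asm)
  ultimately show ?thesis using g by auto
qed

lemma finite_raising_units: "finite (raising_units t)"
  unfolding raising_units_def using finite_raising_pos by simp

lemma card_even_diags: "card (even_diags t :: 'f::field mat set) \<le> t"
  unfolding even_diags_def using card_image_le[of "{..<t}" "even_diag t"] by simp

lemma card_odd_diags: "card (odd_diags t :: 'f::field mat set) \<le> 2 * (t div 2)"
proof -
  have "card (odd_diags t :: 'f mat set)
      \<le> card (odd_up t ` {..<t div 2} :: 'f mat set) + card (odd_down t ` {..<t div 2} :: 'f mat set)"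
    unfolding odd_diags_def by (rule card_Un_le)
  also have "\<dots> \<le> card {..<t div 2} + card {..<t div 2}"
    by (intro add_mono card_image_le) simp_all
  finally show ?thesis by simp
qed

definition diag_gens :: "nat \<Rightarrow> nat \<Rightarrow> nat \<Rightarrow> 'f::field mat set" where
  "diag_gens t k i = (if i < k then even_diags t else odd_diags t)"

text \<open>Substitutions of generators with at least \<open>2t\<close> level-raising arguments evaluate to
  zero, since the levels lie below \<open>2t\<close>.\<close>

definition test_substs :: "nat \<Rightarrow> nat \<Rightarrow> nat \<Rightarrow> (nat \<Rightarrow> 'f::field mat) set" where
  "test_substs t k n = {\<sigma> \<in> PiE {..<n} (\<lambda>i. diag_gens t k i \<union> raising_units t).
     card {i\<in>{..<n}. \<sigma> i \<notin> diag_gens t k i} < 2*t}"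

lemma diag_gens_raise: "g \<in> diag_gens t k i \<Longrightarrow> raises_level (2*t) (level t) 0 g"
  unfolding diag_gens_def using even_diags_raise odd_diags_raise by (cases "i < k") auto

lemma evm_gens_raises_level:
  assumes "m \<in> MLmon n" "\<forall>i<n. s i \<in> diag_gens t k i \<union> raising_units t"
  shows "raises_level (2*t) (level t) (card {i\<in>{..<n}. s i \<notin> diag_gens t k i}) (evm (2*t) k s m)"
proof -
  let ?w = "\<lambda>i. of_bool (s i \<notin> diag_gens t k i) :: nat"
  have "raises_level (2*t) (level t) (?w i) (s i)" if "i \<in> set (leaves m)" for i
  proof (cases "s i \<in> diag_gens t k i")
    case True
    then show ?thesis using diag_gens_raise by simp
  next
    case False
    have "i < n" using that assms(1) by (auto simp: MLmon_def)
    with False assms(2) have "s i \<in> raising_units t" by auto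
    with False show ?thesis using raising_units_raise by simp
  qed
  then have "raises_level (2*t) (level t) (sum_list (map ?w (leaves m))) (evm (2*t) k s m)"
    by (rule evm_raises_level)
  moreover have "sum_list (map ?w (leaves m)) = card {i\<in>{..<n}. s i \<notin> diag_gens t k i}"
    by (simp add: sum_list_leaves_MLmon[OF assms(1)] sum_of_bool_eq Int_def)
  ultimately show ?thesis by simp
qed

lemma evalP_gens_zero_if_vanishes_on_test_substs:
  assumes vanish: "\<forall>\<sigma>\<in>test_substs t k n. \<forall>i<2*t. \<forall>j<2*t. evalP (2*t) k n \<sigma> f i j = 0"
    and s: "\<forall>i<n. s i \<in> diag_gens t k i \<union> raising_units t"
  shows "evalP (2*t) k n s f = (\<lambda>i j. 0)"
proof (cases "card {i\<in>{..<n}. s i \<notin> diag_gens t k i} < 2*t")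
  case True
  have "{i\<in>{..<n}. restrict s {..<n} i \<notin> diag_gens t k i} = {i\<in>{..<n}. s i \<notin> diag_gens t k i}"
    by auto
  with True s have "restrict s {..<n} \<in> test_substs t k n"
    unfolding test_substs_def by simp
  then have inside: "evalP (2*t) k n s f i j = 0" if "i < 2*t" "j < 2*t" for i j
    using vanish that evalP_restrict by metis
  have "evalP (2*t) k n s f i j = 0" if "\<not> (i < 2*t \<and> j < 2*t)" for i j
    unfolding evalP_def using evm_gens_raises_level[OF _ s] that
    by (intro sum.neutral) (auto simp: raises_level_def)
  with inside show ?thesis by (intro ext) metis
next
  case False
  then have "evm (2*t) k s m = (\<lambda>i j. 0)" if "m \<in> MLmon n" for m
    using level_less by (intro raises_level_zero[OF evm_gens_raises_level[OF that s]])
      (meson le_less_trans not_le)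
  then show ?thesis by (simp add: evalP_def)
qed

lemma graded_identity_if_vanishes_on_test_substs:
  fixes f :: "mon \<Rightarrow> 'f::field_char_0"
  assumes "f \<in> Ppoly n"
    and "\<forall>\<sigma>\<in>test_substs t k n. \<forall>i<2*t. \<forall>j<2*t. evalP (2*t) k n \<sigma> f i j = 0"
  shows "graded_identity (2*t) (S0 \<iota> t) (S1 \<iota> t) k n f"
  unfolding graded_identity_def
proof (intro conjI allI impI)
  show "f \<in> Ppoly n" by fact
  fix s :: "nat \<Rightarrow> 'f mat"
  assume s: "(\<forall>i<k. s i \<in> S0 \<iota> t) \<and> (\<forall>i. k \<le> i \<and> i < n \<longrightarrow> s i \<in> S1 \<iota> t)"
  have "s i \<in> mspan (diag_gens t k i \<union> raising_units t)" if "i < n" for i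
  proof (cases "i < k")
    case True
    then have "s i \<in> S0 \<iota> t" using s by simp
    then have "s i \<in> mspan (even_diags t \<union> raising_units t)" using S0_subset_mspan by blast
    then show ?thesis using True by (simp add: diag_gens_def)
  next
    case False
    then have "s i \<in> S1 \<iota> t" using s that by simp
    then have "s i \<in> mspan (odd_diags t \<union> raising_units t)" using S1_subset_mspan by blast
    then show ?thesis using False by (simp add: diag_gens_def)
  qed
  then have "\<forall>i<n. s i \<in> mspan (diag_gens t k i \<union> raising_units t)" by blast
  then show "evalP (2*t) k n s f = (\<lambda>i j. 0)"
    using evalP_gens_zero_if_vanishes_on_test_substs[OF assms(2)] by (rule evalP_zero_on_mspans[rotated])
qed

lemma card_bounded_subsets: "card {T. T \<subseteq> {..<n::nat} \<and> card T \<le> K} \<le> (n + 1) ^ K"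
proof -
  let ?L = "{xs. set xs \<subseteq> {..<n+1} \<and> length xs = K}"
  have "{T. T \<subseteq> {..<n} \<and> card T \<le> K} \<subseteq> (\<lambda>xs. set xs - {n}) ` ?L"
  proof
    fix T assume "T \<in> {T. T \<subseteq> {..<n} \<and> card T \<le> K}"
    then have T: "T \<subseteq> {..<n}" "card T \<le> K" by auto
    then have "finite T" using finite_subset by blast
    define xs where "xs = sorted_list_of_set T @ replicate (K - card T) n"
    have "set xs \<subseteq> {..<n+1}" "length xs = K" "set xs - {n} = T"
      using \<open>finite T\<close> T by (auto simp: xs_def)
    then show "T \<in> (\<lambda>xs. set xs - {n}) ` ?L" by force
  qed
  then have "card {T. T \<subseteq> {..<n} \<and> card T \<le> K} \<le> card ((\<lambda>xs. set xs - {n}) ` ?L)"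
    by (intro card_mono) (simp_all add: finite_lists_length_eq)
  also have "\<dots> \<le> card ?L" by (rule card_image_le) (simp add: finite_lists_length_eq)
  also have "\<dots> = (n + 1) ^ K" by (simp add: card_lists_length_eq)
  finally show ?thesis .
qed

lemma card_PiE_if_le:
  fixes H :: "nat \<Rightarrow> 'a set"
  assumes "finite U" "T \<subseteq> {..<n}"
    and "\<And>i. i < n \<Longrightarrow> finite (H i)" "\<And>i. i < n \<Longrightarrow> H i \<noteq> {}"
  shows "card (PiE {..<n} (\<lambda>i. if i \<in> T then U else H i))
    \<le> (card U + 1) ^ card T * (\<Prod>i<n. card (H i))"
proof -
  have "card (PiE {..<n} (\<lambda>i. if i \<in> T then U else H i))
      = (\<Prod>i<n. card (if i \<in> T then U else H i))"
    by (simp add: card_PiE)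
  also have "\<dots> \<le> (\<Prod>i<n. (if i \<in> T then card U + 1 else 1) * card (H i))"
  proof (rule prod_mono)
    fix i assume "i \<in> {..<n}"
    then have "1 \<le> card (H i)" using assms(3,4) by (simp add: Suc_le_eq card_gt_0_iff)
    then have "card U \<le> (card U + 1) * card (H i)"
      using mult_le_mono2[of 1 "card (H i)" "card U + 1"] by simp
    then show "0 \<le> card (if i \<in> T then U else H i) \<and>
        card (if i \<in> T then U else H i) \<le> (if i \<in> T then card U + 1 else 1) * card (H i)"
      by simp
  qed
  also have "(\<Prod>i<n. (if i \<in> T then card U + 1 else 1)) = (\<Prod>i\<in>{..<n} \<inter> T. card U + 1)"
    by (rule prod.inter_restrict[symmetric]) simp
  then have "(\<Prod>i<n. (if i \<in> T then card U + 1 else 1) * card (H i))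
      = (card U + 1) ^ card T * (\<Prod>i<n. card (H i))"
    using assms(2) by (simp add: prod.distrib Int_absorb1)
  finally show ?thesis .
qed

text \<open>Choose the at most \<open>K\<close> exceptional positions first, then the values.\<close>

lemma card_PiE_few_outside:
  fixes F H :: "nat \<Rightarrow> 'a set"
  assumes U: "finite U" "\<And>i. i < n \<Longrightarrow> F i \<subseteq> U"
    and H: "\<And>i. i < n \<Longrightarrow> finite (H i)" "\<And>i. i < n \<Longrightarrow> H i \<noteq> {}"
  shows "card {\<sigma> \<in> PiE {..<n} F. card {i\<in>{..<n}. \<sigma> i \<notin> H i} \<le> K}
    \<le> (n + 1) ^ K * ((card U + 1) ^ K * (\<Prod>i<n. card (H i)))"
proof -
  let ?TS = "{T. T \<subseteq> {..<n} \<and> card T \<le> K}"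
  let ?P = "\<lambda>T. PiE {..<n} (\<lambda>i. if i \<in> T then U else H i)"
  let ?B = "(card U + 1) ^ K * (\<Prod>i<n. card (H i))"
  have fin_TS: "finite ?TS" by (rule finite_subset[of _ "Pow {..<n}"]) auto
  have fin_P: "finite (?P T)" for T
    using U(1) H(1) by (intro finite_PiE) auto
  have "{\<sigma> \<in> PiE {..<n} F. card {i\<in>{..<n}. \<sigma> i \<notin> H i} \<le> K} \<subseteq> (\<Union>T\<in>?TS. ?P T)"
  proof
    fix \<sigma> assume \<sigma>: "\<sigma> \<in> {\<sigma> \<in> PiE {..<n} F. card {i\<in>{..<n}. \<sigma> i \<notin> H i} \<le> K}"
    let ?T = "{i\<in>{..<n}. \<sigma> i \<notin> H i}"
    have "\<sigma> i \<in> (if i \<in> ?T then U else H i)" if "i < n" for i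
      using \<sigma> U(2)[OF that] that by (auto simp: PiE_iff)
    moreover have "\<sigma> \<in> extensional {..<n}" using \<sigma> by (simp add: PiE_iff)
    ultimately have "\<sigma> \<in> ?P ?T" by (simp add: PiE_iff)
    moreover have "?T \<in> ?TS" using \<sigma> by auto
    ultimately show "\<sigma> \<in> (\<Union>T\<in>?TS. ?P T)" by (rule UN_I[rotated])
  qed
  then have "card {\<sigma> \<in> PiE {..<n} F. card {i\<in>{..<n}. \<sigma> i \<notin> H i} \<le> K}
      \<le> card (\<Union>T\<in>?TS. ?P T)"
    using fin_TS fin_P by (intro card_mono) auto
  also have "\<dots> \<le> (\<Sum>T\<in>?TS. card (?P T))" by (rule card_UN_le[OF fin_TS])
  also have "\<dots> \<le> (\<Sum>T\<in>?TS. ?B)"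
  proof (rule sum_mono)
    fix T assume T: "T \<in> ?TS"
    then have "card (?P T) \<le> (card U + 1) ^ card T * (\<Prod>i<n. card (H i))"
      using U(1) H by (intro card_PiE_if_le) auto
    also have "\<dots> \<le> ?B" using T by (intro mult_right_mono power_increasing) auto
    finally show "card (?P T) \<le> ?B" .
  qed
  also have "\<dots> = card ?TS * ?B" by simp
  also have "\<dots> \<le> (n + 1) ^ K * ?B" by (intro mult_right_mono card_bounded_subsets) simp
  finally show ?thesis .
qed

lemma finite_diag_gens: "finite (diag_gens t k i)"
  by (simp add: diag_gens_def even_diags_def odd_diags_def)

lemma finite_test_substs: "finite (test_substs t k n)"
proof (rule finite_subset)
  show "test_substs t k n \<subseteq> PiE {..<n} (\<lambda>i. diag_gens t k i \<union> raising_units t)"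
    unfolding test_substs_def by blast
  show "finite (PiE {..<n} (\<lambda>i. diag_gens t k i \<union> raising_units t))"
    by (intro finite_PiE) (simp_all add: finite_diag_gens finite_raising_units)
qed

lemma prod_card_diag_gens:
  assumes "k \<le> n"
  shows "(\<Prod>i<n. card (diag_gens t k i :: 'f::field mat set)) \<le> t ^ k * (2 * (t div 2)) ^ (n - k)"
proof -
  let ?g = "\<lambda>i. if i < k then t else 2 * (t div 2)"
  have "(\<Prod>i<n. card (diag_gens t k i :: 'f mat set)) \<le> (\<Prod>i<n. ?g i)"
    by (intro prod_mono) (simp add: diag_gens_def card_even_diags card_odd_diags)
  also have "{..<n} = {..<k} \<union> {k..<n}" using assms by auto
  then have "(\<Prod>i<n. ?g i) = (\<Prod>i<k. ?g i) * (\<Prod>i\<in>{k..<n}. ?g i)"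
    by (simp add: prod.union_disjoint ivl_disj_int_one(2))
  also have "\<dots> = t ^ k * (2 * (t div 2)) ^ (n - k)" by simp
  finally show ?thesis .
qed

lemma diag_gens_nonempty:
  assumes "2 \<le> t"
  shows "diag_gens t k i \<noteq> {}"
proof -
  have "even_diag t 0 \<in> even_diags t" "odd_up t 0 \<in> odd_diags t"
    using assms by (simp_all add: even_diags_def odd_diags_def)
  then show ?thesis by (auto simp: diag_gens_def)
qed

lemma card_test_substs:
  assumes "2 \<le> t" "k \<le> n"
  shows "card (test_substs t k n :: (nat \<Rightarrow> 'f::field mat) set)
    \<le> (n + 1) ^ (2*t) * ((card (even_diags t \<union> odd_diags t \<union> raising_units t :: 'f mat set) + 1) ^ (2*t)
       * (t ^ k * (2 * (t div 2)) ^ (n - k)))"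
proof -
  let ?U = "even_diags t \<union> odd_diags t \<union> raising_units t :: 'f mat set"
  let ?F = "\<lambda>i. diag_gens t k i \<union> raising_units t :: 'f mat set"
  let ?S = "{\<sigma> \<in> PiE {..<n} ?F. card {i\<in>{..<n}. \<sigma> i \<notin> diag_gens t k i} \<le> 2*t}"
  have "finite (PiE {..<n} ?F)"
    by (intro finite_PiE) (simp_all add: finite_diag_gens finite_raising_units)
  then have "finite ?S" by (rule finite_subset[rotated]) blast
  moreover have "test_substs t k n \<subseteq> ?S"
    unfolding test_substs_def by (simp add: Collect_mono_iff)
  ultimately have "card (test_substs t k n :: (nat \<Rightarrow> 'f mat) set) \<le> card ?S"
    by (rule card_mono)
  also have "\<dots> \<le> (n + 1) ^ (2*t) * ((card ?U + 1) ^ (2*t) * (\<Prod>i<n. card (diag_gens t k i :: 'f mat set)))"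
  proof (rule card_PiE_few_outside)
    show "finite ?U"
      using finite_raising_units by (simp add: even_diags_def odd_diags_def)
    fix i
    show "?F i \<subseteq> ?U" by (auto simp: diag_gens_def)
    show "finite (diag_gens t k i :: 'f mat set)" by (rule finite_diag_gens)
    show "diag_gens t k i \<noteq> ({} :: 'f mat set)" by (rule diag_gens_nonempty[OF assms(1)])
  qed
  also have "\<dots> \<le> (n + 1) ^ (2*t) * ((card ?U + 1) ^ (2*t) * (t ^ k * (2 * (t div 2)) ^ (n - k)))"
    by (intro mult_left_mono prod_card_diag_gens[OF assms(2)]) simp_all
  finally show ?thesis .
qed

section \<open>The exponential bound\<close>

lemma codim_S_le:
  "codim (2*t) (S0 \<iota> t :: 'f::field_char_0 mat set) (S1 \<iota> t) k n
     \<le> card (test_substs t k n :: (nat \<Rightarrow> 'f mat) set) * (2*t) * (2*t)"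
proof (rule codim_le_card_tests)
  show "finite (test_substs t k n :: (nat \<Rightarrow> 'f mat) set)" by (rule finite_test_substs)
  fix f :: "mon \<Rightarrow> 'f"
  assume "f \<in> Ppoly n" "\<forall>s\<in>test_substs t k n. \<forall>i<2*t. \<forall>j<2*t. evalP (2*t) k n s f i j = 0"
  then show "graded_identity (2*t) (S0 \<iota> t) (S1 \<iota> t) k n f"
    by (rule graded_identity_if_vanishes_on_test_substs)
qed

lemma cgr_S_le:
  assumes "2 \<le> t"
  defines "g \<equiv> card (even_diags t \<union> odd_diags t \<union> raising_units t :: 'f::field_char_0 mat set)"
  shows "cgr (2*t) (S0 \<iota> t :: 'f mat set) (S1 \<iota> t) n
     \<le> (2*t) * (2*t) * (n + 1) ^ (2*t) * (g + 1) ^ (2*t) * (t + 2 * (t div 2)) ^ n"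
proof -
  let ?C = "(2*t) * (2*t) * (n + 1) ^ (2*t) * (g + 1) ^ (2*t)"
  have "cgr (2*t) (S0 \<iota> t :: 'f mat set) (S1 \<iota> t) n
      \<le> (\<Sum>k\<le>n. (n choose k) * (?C * (t ^ k * (2 * (t div 2)) ^ (n - k))))"
    unfolding cgr_def
  proof (intro sum_mono mult_left_mono)
    fix k assume "k \<in> {..n}"
    have "codim (2*t) (S0 \<iota> t :: 'f mat set) (S1 \<iota> t) k n
        \<le> card (test_substs t k n :: (nat \<Rightarrow> 'f mat) set) * (2*t) * (2*t)"
      by (rule codim_S_le)
    also have "\<dots> \<le> (n + 1) ^ (2*t) * ((g + 1) ^ (2*t) * (t ^ k * (2 * (t div 2)) ^ (n - k))) * (2*t) * (2*t)"
      using card_test_substs[OF assms(1), of k n, where 'f = 'f] \<open>k \<in> {..n}\<close>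
      unfolding g_def by (intro mult_right_mono) auto
    also have "\<dots> = ?C * (t ^ k * (2 * (t div 2)) ^ (n - k))"
      by (simp add: algebra_simps)
    finally show "codim (2*t) (S0 \<iota> t :: 'f mat set) (S1 \<iota> t) k n
        \<le> ?C * (t ^ k * (2 * (t div 2)) ^ (n - k))" .
  qed simp
  also have "\<dots> = ?C * (\<Sum>k\<le>n. (n choose k) * t ^ k * (2 * (t div 2)) ^ (n - k))"
    by (simp add: sum_distrib_left mult_ac)
  also have "\<dots> = ?C * (t + 2 * (t div 2)) ^ n"
    by (simp add: binomial)
  finally show ?thesis .
qed

lemma limsup_root_le:
  fixes a :: "nat \<Rightarrow> real"
  assumes bound: "\<And>n. a n \<le> C * (real n + 1) ^ K * c ^ n" and "0 < C" "0 \<le> c"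
  shows "limsup (\<lambda>n. ereal (root n (a n))) \<le> ereal c"
proof -
  let ?h = "\<lambda>n. root n (C * 2 ^ K) * root n (real n) ^ K * c"
  have "eventually (\<lambda>n. ereal (root n (a n)) \<le> ereal (?h n)) sequentially"
  proof (rule eventually_sequentiallyI[of 1])
    fix n :: nat assume n: "1 \<le> n"
    have "a n \<le> C * (real n + 1) ^ K * c ^ n" by (rule bound)
    also have "\<dots> \<le> C * (2 * real n) ^ K * c ^ n"
      using n assms(2,3) by (intro mult_right_mono mult_left_mono power_mono) auto
    also have "\<dots> = C * 2 ^ K * real n ^ K * c ^ n" by (simp add: power_mult_distrib)
    finally have "root n (a n) \<le> root n (C * 2 ^ K * real n ^ K * c ^ n)"
      using n by (intro real_root_le_mono) auto
    also have "\<dots> = ?h n"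
      using n assms(2,3) by (simp add: real_root_mult real_root_power real_root_power_cancel)
    finally show "ereal (root n (a n)) \<le> ereal (?h n)" by simp
  qed
  then have "limsup (\<lambda>n. ereal (root n (a n))) \<le> limsup (\<lambda>n. ereal (?h n))"
    by (rule Limsup_mono)
  moreover have "?h \<longlonglongrightarrow> 1 * 1 ^ K * c"
    using assms(2) by (intro tendsto_mult tendsto_power LIMSEQ_root_const LIMSEQ_root tendsto_const) simp
  then have "limsup (\<lambda>n. ereal (?h n)) = ereal c"
    by (intro lim_imp_Limsup) (simp_all add: tendsto_ereal)
  ultimately show ?thesis by simp
qed

theorem proposition3:
  fixes t :: nat and \<iota> :: invkind
  assumes "t \<ge> 2"
    and "\<iota> = Symp \<longrightarrow> even t"
  shows "grexp_upper (2 * t) (S0 \<iota> t :: 'f::field_char_0 mat set) (S1 \<iota> t)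
           \<le> ereal (if even t then 2 * real t else 2 * real t - 1)"
proof -
  define g where "g = card (even_diags t \<union> odd_diags t \<union> raising_units t :: 'f mat set)"
  define C where "C = real ((2*t) * (2*t) * (g + 1) ^ (2*t))"
  have "real (cgr (2*t) (S0 \<iota> t :: 'f mat set) (S1 \<iota> t) n)
      \<le> real ((2*t) * (2*t) * (n + 1) ^ (2*t) * (g + 1) ^ (2*t) * (t + 2 * (t div 2)) ^ n)" for n
    using cgr_S_le[OF assms(1), of \<iota> n, where 'f = 'f] unfolding g_def by (simp only: of_nat_le_iff)
  also have "real ((2*t) * (2*t) * (n + 1) ^ (2*t) * (g + 1) ^ (2*t) * (t + 2 * (t div 2)) ^ n)
      = C * (real n + 1) ^ (2*t) * real (t + 2 * (t div 2)) ^ n" for n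
    by (simp add: C_def algebra_simps)
  finally have "real (cgr (2*t) (S0 \<iota> t :: 'f mat set) (S1 \<iota> t) n)
      \<le> C * (real n + 1) ^ (2*t) * real (t + 2 * (t div 2)) ^ n" for n .
  then have "grexp_upper (2 * t) (S0 \<iota> t :: 'f mat set) (S1 \<iota> t) \<le> ereal (real (t + 2 * (t div 2)))"
    unfolding grexp_upper_def using assms(1) by (intro limsup_root_le) (auto simp: C_def)
  also have "real (t + 2 * (t div 2)) = (if even t then 2 * real t else 2 * real t - 1)"
    by (cases "even t") (auto elim: oddE)
  finally show ?thesis .
qed

end
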